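(* Let $z=(x,\sigma)$ be a complete bounded solution of the hybrid system $\mathcal H=(C,f,D,g)$. For $j\in N$ let $t_{0,j}<t_{1,j}<t_{2,j}<\dots$ denote the successive (ordinary) time instants at which the value of $\sigma_j$ changes along the solution. Then there exists $\tau>0$ such that $t_{\ell+1,j}-t_{\ell,j}\ge\tau$ for all $\ell\ge1$ and all $j\in N$ (for which these instants exist).
   Context: Network model. $(N,E)$ is a connected directed graph with $N=\{1,\dots,|N|\}$, $E\subseteq N\times N$, with arbitrary orientation: if $(i,j)\in E$ then $(j,i)\notin E$. For $j\in N$, "$i:i\to j$" ranges over $i$ with $(i,j)\in E$ and "$k:j\to k$" over $k$ with $(j,k)\in E$. Constants: $M_j>0$, $p^L_j\in\mathbb{R}$ ($j\in N$), $B_{ij}>0$ ($(i,j)\in E$). Continuous state $x=(\eta,\omega,x^s)\in\mathbb{R}^n$ with $\eta_{ij}\in\mathbb{R}$ ($(i,j)\in E$), $\omega_j\in\mathbb{R}$, $x^s_j\in\mathbb{R}^{n_j}$ ($j\in N$), $n=|E|+|N|+\sum_jn_j$; $p_{ij}=B_{ij}\sin\eta_{ij}$, $s_j=g_j(x^s_j,-\omega_j)$, where $f_j:\mathbb{R}^{n_j}\times\mathbb{R}\to\mathbb{R}^{n_j}$, $g_j:\mathbb{R}^{n_j}\times\mathbb{R}\to\mathbb{R}$ are globally Lipschitz. Hysteretic loads as a hybrid system. For each $j$ constants $\overline d_j\ge0$ and thresholds $\omega^1_j>\omega^0_j>0$ are given. ${\rm sgn}(a)=1$ if $a\ge0$ and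 $-1$ otherwise. The discrete state is $\sigma\in P^{|N|}$, $P=\{-1,0,1\}$, and $z=(x,\sigma)$. Let $\mathcal I_j(\omega_j)=\{{\rm sgn}(\omega_j)\}$ if $|\omega_j|>\omega^1_j$, $\{0\}$ if $|\omega_j|<\omega^0_j$, $\{0,{\rm sgn}(\omega_j)\}$ if $\omega^0_j\le|\omega_j|\le\omega^1_j$; $\Lambda=C=\{z\in\mathbb{R}^n\times P^{|N|}:\sigma_j\in\mathcal I_j(\omega_j)\ \forall j\}$. Flow map $f$ on $C$: $\dot\eta_{ij}=\omega_i-\omega_j$; $M_j\dot\omega_j=-p^L_j+s_j-\overline d_j\sigma_j-\sum_{k:j\to k}p_{jk}+\sum_{i:i\to j}p_{ij}$; $\dot x^s_j=f_j(x^s_j,-\omega_j)$; $\dot\sigma_j=0$. Jump set $D$: the set of $z\in\Lambda$ such that for some $j$, either ($|\omega_j|=\omega^1_j$ and $\sigma_j=0$) or ($|\omega_j|=\omega^0_j$ and $\sigma_j={\rm sgn}(\omega_j)$). Jump map $g$ on $D$: $x^+=x$; $\sigma_j^+={\rm sgn}(\omega_j)$ if $|\omega_j|=\omega^1_j$ and $\sigma_j=0$, $\sigma_j^+=0$ if $|\omega_j|=\omega^0_j$ and $\sigma_j={\rm sgn}(\omega_j)$, $\sigma_j^+=\sigma_j$ otherwise. Hybrid solutions. A hybrid time domain is a subset $K\subseteq\mathbb{R}_{\ge0}\times\mathbb{N}_0$ that is a union of a finite or infinite sequence of sets $[t_\ell,t_{\ell+1}]\times\{\ell\}$ ($0=t_0\le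 t_1\le\dots$), the last one (if any) possibly of the form $[t_\ell,t_{\ell+1})\times\{\ell\}$ or $[t_\ell,\infty)\times\{\ell\}$. A solution of $\mathcal H$ is a map $z:K\to\mathbb{R}^n\times P^{|N|}$ on a hybrid time domain with $z(0,0)\in C\cup D$, such that for each $\ell$, $t\mapsto z(t,\ell)$ is locally absolutely continuous on $T_\ell=\{t:(t,\ell)\in K\}$, and if $T_\ell$ has nonempty interior then $z(t,\ell)\in C$ for all $t$ in the interior and $\dot z(t,\ell)=f(z(t,\ell))$ for almost all $t\in T_\ell$; and whenever $(t,\ell),(t,\ell+1)\in K$, $z(t,\ell)\in D$ and $z(t,\ell+1)=g(z(t,\ell))$. A solution is complete if $K$ is unbounded, and bounded if its range is bounded. *)

theory Defs
  imports "HOL-Analysis.Analysis"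
begin

text \<open>Continuous state x = (eta, omega, x^s) and discrete state sigma, bundled.
  Only the components eta e (e in E), om j (j in N), xs j k (j in N, k < n_j)
  and sg j (j in N) are meaningful; other entries are ignored everywhere.\<close>
record hstate =
  eta :: "nat \<times> nat \<Rightarrow> real"
  om  :: "nat \<Rightarrow> real"
  xs  :: "nat \<Rightarrow> nat \<Rightarrow> real"
  sg  :: "nat \<Rightarrow> int"

definition sgnh :: "real \<Rightarrow> int" where
  "sgnh a = (if a \<ge> 0 then 1 else -1)"

definition Iset :: "real \<Rightarrow> real \<Rightarrow> real \<Rightarrow> int set" where
  "Iset w0 w1 w = (if \<bar>w\<bar> > w1 then {sgnh w} else if \<bar>w\<bar> < w0 then {0} else {0, sgnh w})"

text \<open>Lambda = C\<close>
definition inLam :: "nat \<Rightarrow> (nat \<Rightarrow> real) \<Rightarrow> (nat \<Rightarrow> real) \<Rightarrow> hstate \<Rightarrow> bool" where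
  "inLam nN w0 w1 z \<longleftrightarrow> (\<forall>j\<in>{1..nN}. sg z j \<in> Iset (w0 j) (w1 j) (om z j))"

definition inD :: "nat \<Rightarrow> (nat \<Rightarrow> real) \<Rightarrow> (nat \<Rightarrow> real) \<Rightarrow> hstate \<Rightarrow> bool" where
  "inD nN w0 w1 z \<longleftrightarrow> inLam nN w0 w1 z \<and>
     (\<exists>j\<in>{1..nN}. (\<bar>om z j\<bar> = w1 j \<and> sg z j = 0) \<or> (\<bar>om z j\<bar> = w0 j \<and> sg z j = sgnh (om z j)))"

text \<open>z' = g(z) (on the meaningful components)\<close>
definition jump_ok :: "nat \<Rightarrow> (nat \<times> nat) set \<Rightarrow> (nat \<Rightarrow> nat) \<Rightarrow> (nat \<Rightarrow> real) \<Rightarrow> (nat \<Rightarrow> real)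
    \<Rightarrow> hstate \<Rightarrow> hstate \<Rightarrow> bool" where
  "jump_ok nN E ns w0 w1 z z' \<longleftrightarrow>
     (\<forall>e\<in>E. eta z' e = eta z e) \<and>
     (\<forall>j\<in>{1..nN}. om z' j = om z j \<and> (\<forall>k<ns j. xs z' j k = xs z j k) \<and>
        sg z' j = (if \<bar>om z j\<bar> = w1 j \<and> sg z j = 0 then sgnh (om z j)
                   else if \<bar>om z j\<bar> = w0 j \<and> sg z j = sgnh (om z j) then 0
                   else sg z j))"

definition restr :: "nat \<Rightarrow> (nat \<Rightarrow> real) \<Rightarrow> nat \<Rightarrow> real" where
  "restr n v = (\<lambda>k. if k < n then v k else 0)"

text \<open>right-hand side of M_j omega_j' = ..., divided by M_j\<close>
definition omega_rhs :: "(nat \<times> nat) set \<Rightarrow> (nat \<Rightarrow> real) \<Rightarrow> (nat \<Rightarrow> real) \<Rightarrow> (nat \<times> nat \<Rightarrow> real)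
    \<Rightarrow> (nat \<Rightarrow> nat) \<Rightarrow> (nat \<Rightarrow> (nat \<Rightarrow> real) \<Rightarrow> real \<Rightarrow> real) \<Rightarrow> (nat \<Rightarrow> real)
    \<Rightarrow> nat \<Rightarrow> hstate \<Rightarrow> real" where
  "omega_rhs E M pL B ns gs dbar j z =
     (- pL j + gs j (restr (ns j) (xs z j)) (- om z j) - dbar j * real_of_int (sg z j)
      - (\<Sum>k\<in>{k. (j, k) \<in> E}. B (j, k) * sin (eta z (j, k)))
      + (\<Sum>i\<in>{i. (i, j) \<in> E}. B (i, j) * sin (eta z (i, j)))) / M j"

text \<open>Each meaningful scalar coordinate of z, paired with its component of the flow map f\<close>
definition flow_coords :: "nat \<Rightarrow> (nat \<times> nat) set \<Rightarrow> (nat \<Rightarrow> real) \<Rightarrow> (nat \<Rightarrow> real)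
    \<Rightarrow> (nat \<times> nat \<Rightarrow> real) \<Rightarrow> (nat \<Rightarrow> nat)
    \<Rightarrow> (nat \<Rightarrow> (nat \<Rightarrow> real) \<Rightarrow> real \<Rightarrow> (nat \<Rightarrow> real))
    \<Rightarrow> (nat \<Rightarrow> (nat \<Rightarrow> real) \<Rightarrow> real \<Rightarrow> real) \<Rightarrow> (nat \<Rightarrow> real)
    \<Rightarrow> ((hstate \<Rightarrow> real) \<times> (hstate \<Rightarrow> real)) set" where
  "flow_coords nN E M pL B ns fs gs dbar =
     {((\<lambda>z. eta z (i, j)), (\<lambda>z. om z i - om z j)) | i j. (i, j) \<in> E}
   \<union> {((\<lambda>z. om z j), omega_rhs E M pL B ns gs dbar j) | j. j \<in> {1..nN}}
   \<union> {((\<lambda>z. xs z j k), (\<lambda>z. fs j (restr (ns j) (xs z j)) (- om z j) k)) | j k. j \<in> {1..nN} \<and> k < ns j}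
   \<union> {((\<lambda>z. real_of_int (sg z j)), (\<lambda>z. 0)) | j. j \<in> {1..nN}}"

definition abs_cont_on :: "real set \<Rightarrow> (real \<Rightarrow> real) \<Rightarrow> bool" where
  "abs_cont_on S f \<longleftrightarrow> (\<forall>\<epsilon>>0. \<exists>\<delta>>0. \<forall>(n::nat) a b.
      (\<forall>k<n. a k \<le> b k \<and> {a k..b k} \<subseteq> S) \<and> (\<forall>k. Suc k < n \<longrightarrow> b k \<le> a (Suc k)) \<and>
      (\<Sum>k<n. b k - a k) < \<delta> \<longrightarrow> (\<Sum>k<n. \<bar>f (b k) - f (a k)\<bar>) < \<epsilon>)"

definition loc_abs_cont_on :: "real set \<Rightarrow> (real \<Rightarrow> real) \<Rightarrow> bool" where
  "loc_abs_cont_on T f \<longleftrightarrow> (\<forall>a b. {a..b} \<subseteq> T \<longrightarrow> abs_cont_on {a..b} f)"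

definition hybrid_time_domain :: "(real \<times> nat) set \<Rightarrow> bool" where
  "hybrid_time_domain K \<longleftrightarrow> (\<exists>(tt :: nat \<Rightarrow> real) (L :: nat).
     tt 0 = 0 \<and> (\<forall>l. tt l \<le> tt (Suc l)) \<and>
     (K = (\<Union>l. {tt l..tt (Suc l)} \<times> {l})
      \<or> K = (\<Union>l<L. {tt l..tt (Suc l)} \<times> {l})
      \<or> K = (\<Union>l<L. {tt l..tt (Suc l)} \<times> {l}) \<union> ({tt L..<tt (Suc L)} \<times> {L})
      \<or> K = (\<Union>l<L. {tt l..tt (Suc l)} \<times> {l}) \<union> ({tt L..} \<times> {L})))"

definition is_solution :: "nat \<Rightarrow> (nat \<times> nat) set \<Rightarrow> (nat \<Rightarrow> real) \<Rightarrow> (nat \<Rightarrow> real)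
    \<Rightarrow> (nat \<times> nat \<Rightarrow> real) \<Rightarrow> (nat \<Rightarrow> nat)
    \<Rightarrow> (nat \<Rightarrow> (nat \<Rightarrow> real) \<Rightarrow> real \<Rightarrow> (nat \<Rightarrow> real))
    \<Rightarrow> (nat \<Rightarrow> (nat \<Rightarrow> real) \<Rightarrow> real \<Rightarrow> real) \<Rightarrow> (nat \<Rightarrow> real)
    \<Rightarrow> (nat \<Rightarrow> real) \<Rightarrow> (nat \<Rightarrow> real)
    \<Rightarrow> (real \<times> nat) set \<Rightarrow> (real \<times> nat \<Rightarrow> hstate) \<Rightarrow> bool" where
  "is_solution nN E M pL B ns fs gs dbar w0 w1 K z \<longleftrightarrow>
     hybrid_time_domain K \<and> (0, 0) \<in> K \<and>
     (inLam nN w0 w1 (z (0, 0)) \<or> inD nN w0 w1 (z (0, 0))) \<and>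
     (\<forall>l. (\<forall>(c, r) \<in> flow_coords nN E M pL B ns fs gs dbar.
             loc_abs_cont_on {t. (t, l) \<in> K} (\<lambda>t. c (z (t, l)))) \<and>
          (interior {t. (t, l) \<in> K} \<noteq> {} \<longrightarrow>
             (\<forall>t\<in>interior {t. (t, l) \<in> K}. inLam nN w0 w1 (z (t, l))) \<and>
             (\<forall>(c, r) \<in> flow_coords nN E M pL B ns fs gs dbar.
                AE t in lebesgue. t \<in> {t. (t, l) \<in> K} \<longrightarrow>
                  ((\<lambda>s. c (z (s, l))) has_real_derivative r (z (t, l))) (at t within {t. (t, l) \<in> K})))) \<and>
     (\<forall>t l. (t, l) \<in> K \<and> (t, Suc l) \<in> K \<longrightarrow>
        inD nN w0 w1 (z (t, l)) \<and> jump_ok nN E ns w0 w1 (z (t, l)) (z (t, Suc l)))"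

definition complete_dom :: "(real \<times> nat) set \<Rightarrow> bool" where
  "complete_dom K \<longleftrightarrow> (\<forall>R. \<exists>(t, l) \<in> K. R < t \<or> R < real l)"

definition bounded_sol :: "nat \<Rightarrow> (nat \<times> nat) set \<Rightarrow> (nat \<Rightarrow> nat) \<Rightarrow> (real \<times> nat) set
    \<Rightarrow> (real \<times> nat \<Rightarrow> hstate) \<Rightarrow> bool" where
  "bounded_sol nN E ns K z \<longleftrightarrow> (\<exists>R. \<forall>p\<in>K.
     (\<forall>e\<in>E. \<bar>eta (z p) e\<bar> \<le> R) \<and>
     (\<forall>j\<in>{1..nN}. \<bar>om (z p) j\<bar> \<le> R \<and> \<bar>sg (z p) j\<bar> \<le> R \<and> (\<forall>k<ns j. \<bar>xs (z p) j k\<bar> \<le> R)))"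

definition switch_times :: "(real \<times> nat) set \<Rightarrow> (real \<times> nat \<Rightarrow> hstate) \<Rightarrow> nat \<Rightarrow> real set" where
  "switch_times K z j = {t. \<exists>l. (t, l) \<in> K \<and> (t, Suc l) \<in> K \<and> sg (z (t, Suc l)) j \<noteq> sg (z (t, l)) j}"

text \<open>Euclidean distance in R^n x R, vectors of R^n given as nat => real (first n entries)\<close>
definition dist_nR :: "nat \<Rightarrow> (nat \<Rightarrow> real) \<Rightarrow> real \<Rightarrow> (nat \<Rightarrow> real) \<Rightarrow> real \<Rightarrow> real" where
  "dist_nR n v a w b = sqrt ((\<Sum>k<n. (v k - w k)\<^sup>2) + (a - b)\<^sup>2)"

definition norm_n :: "nat \<Rightarrow> (nat \<Rightarrow> real) \<Rightarrow> real" where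
  "norm_n n v = sqrt (\<Sum>k<n. (v k)\<^sup>2)"

end

(* Along a bounded solution the right-hand side of the equation for omega_j is bounded by
   some C, since g_j is Lipschitz and all other terms are bounded. An absolutely continuous
   function whose derivative is a.e. bounded by C is C-Lipschitz, so omega_j is C-Lipschitz on
   every flow interval, and since jumps do not change it, in ordinary time. During flows sigma_j
   is constant, and a jump either switches it on (from 0, at |omega_j| = omega^1_j) or off (to 0,
   at |omega_j| = omega^0_j). Between two switches of sigma_j there is thus a switch on and a
   switch off, so |omega_j| travels from one threshold to the other, which takes time at least
   (omega^1_j - omega^0_j) / C. This bounds the gap between any two switches, the first one
   included. *)

theory Submission
  imports Defs
begin

section \<open>Absolutely continuous functions with a.e. bounded derivative\<close>

definition ordered_intervals :: "real set \<Rightarrow> nat \<Rightarrow> (nat \<Rightarrow> real) \<Rightarrow> (nat \<Rightarrow> real) \<Rightarrow> bool" where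
  "ordered_intervals S n l r \<longleftrightarrow>
     (\<forall>k<n. l k \<le> r k \<and> {l k..r k} \<subseteq> S) \<and> (\<forall>k. Suc k < n \<longrightarrow> r k \<le> l (Suc k))"

lemma abs_cont_on_iff_ordered_intervals:
  "abs_cont_on S f \<longleftrightarrow> (\<forall>\<epsilon>>0. \<exists>\<delta>>0. \<forall>n l r. ordered_intervals S n l r \<and> (\<Sum>k<n. r k - l k) < \<delta>
      \<longrightarrow> (\<Sum>k<n. \<bar>f (r k) - f (l k)\<bar>) < \<epsilon>)"
  by (simp add: abs_cont_on_def ordered_intervals_def)

lemma ordered_intervals_sorted:
  assumes "ordered_intervals S n l r" "k < k'" "k' < n"
  shows "r k \<le> l k'"
  using assms(2,3)
proof (induction k')
  case 0
  then show ?case by simp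
next
  case (Suc k')
  have step: "r k' \<le> l (Suc k')"
    using assms(1) Suc.prems(2) unfolding ordered_intervals_def by blast
  show ?case
  proof (cases "k = k'")
    case True
    with step show ?thesis by simp
  next
    case False
    then have "r k \<le> l k'" using Suc by simp
    also have "l k' \<le> r k'" using assms(1) Suc.prems(2) unfolding ordered_intervals_def by simp
    finally show ?thesis using step by simp
  qed
qed

lemma ordered_intervals_mono: "ordered_intervals S n l r \<Longrightarrow> S \<subseteq> T \<Longrightarrow> ordered_intervals T n l r"
  unfolding ordered_intervals_def by (meson order_trans)

lemma ordered_intervals_snoc:
  assumes ord: "ordered_intervals S n l r" and "S \<subseteq> {..s}" "s \<le> u" "S \<subseteq> T" "{s..u} \<subseteq> T"
  shows "ordered_intervals T (Suc n) (l(n := s)) (r(n := u))"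
  unfolding ordered_intervals_def
proof (rule conjI; intro allI impI)
  fix k assume "k < Suc n"
  then show "(l(n := s)) k \<le> (r(n := u)) k \<and> {(l(n := s)) k..(r(n := u)) k} \<subseteq> T"
  proof (cases "k = n")
    case False
    with \<open>k < Suc n\<close> have "k < n" by simp
    then show ?thesis using ord False assms(4) unfolding ordered_intervals_def by auto
  qed (use assms(3,5) in simp)
next
  fix k assume k: "Suc k < Suc n"
  show "(r(n := u)) k \<le> (l(n := s)) (Suc k)"
  proof (cases "Suc k = n")
    case True
    then have "l k \<le> r k" "{l k..r k} \<subseteq> S" using ord unfolding ordered_intervals_def by auto
    then have "r k \<in> S" by auto
    then show ?thesis using True assms(2) by auto
  next
    case False
    then show ?thesis using ord k unfolding ordered_intervals_def by auto
  qed
qed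

lemma ordered_intervals_length_le_measure:
  assumes ord: "ordered_intervals S n l r" and "S \<subseteq> G" "G \<in> lmeasurable"
  shows "(\<Sum>k<n. r k - l k) \<le> measure lebesgue G"
proof -
  have disj: "pairwise (\<lambda>k k'. disjnt {l k<..<r k} {l k'<..<r k'}) {..<n}"
  proof (rule pairwiseI)
    fix k k' assume "k \<in> {..<n}" "k' \<in> {..<n}" "k \<noteq> k'"
    then have "r k \<le> l k' \<or> r k' \<le> l k"
      using ordered_intervals_sorted[OF ord] by (metis lessThan_iff linorder_neqE_nat)
    then show "disjnt {l k<..<r k} {l k'<..<r k'}" by (auto simp: disjnt_def)
  qed
  have "(\<Sum>k<n. r k - l k) = measure lebesgue (\<Union>k<n. {l k<..<r k})"
    using ord by (subst measure_UNION'[OF _ _ disj]) (auto simp: ordered_intervals_def)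
  also have "\<dots> \<le> measure lebesgue G"
  proof (rule measure_mono_fmeasurable[OF _ _ assms(3)])
    show "(\<Union>k<n. {l k<..<r k}) \<subseteq> G"
    proof (rule UN_least)
      fix k assume "k \<in> {..<n}"
      then have "{l k..r k} \<subseteq> S" using ord unfolding ordered_intervals_def by auto
      moreover have "{l k<..<r k} \<subseteq> {l k..r k}" by auto
      ultimately show "{l k<..<r k} \<subseteq> G" using assms(2) by blast
    qed
  qed auto
  finally show ?thesis .
qed

lemma abs_cont_on_small_increment:
  assumes "abs_cont_on S f" "\<epsilon> > 0"
  obtains \<delta> where "\<delta> > 0" "\<And>u v. u \<le> v \<Longrightarrow> {u..v} \<subseteq> S \<Longrightarrow> v - u < \<delta> \<Longrightarrow> \<bar>f v - f u\<bar> < \<epsilon>"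
proof -
  obtain \<delta> where "\<delta> > 0" and small: "\<forall>n l r. ordered_intervals S n l r \<and> (\<Sum>k<n. r k - l k) < \<delta>
      \<longrightarrow> (\<Sum>k<n. \<bar>f (r k) - f (l k)\<bar>) < \<epsilon>"
    using assms unfolding abs_cont_on_iff_ordered_intervals by blast
  show ?thesis
  proof (rule that[OF \<open>\<delta> > 0\<close>])
    fix u v assume "u \<le> v" "{u..v} \<subseteq> S" "v - u < \<delta>"
    then show "\<bar>f v - f u\<bar> < \<epsilon>"
      using small[rule_format, of 1 "\<lambda>_. u" "\<lambda>_. v"] by (simp add: ordered_intervals_def)
  qed
qed

lemma abs_cont_on_imp_continuous_on:
  assumes "abs_cont_on {a..b} f"
  shows "continuous_on {a..b} f"
  unfolding continuous_on_iff
proof (intro ballI allI impI)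
  fix x \<epsilon> :: real assume x: "x \<in> {a..b}" and "\<epsilon> > 0"
  obtain \<delta> where "\<delta> > 0"
    and small: "\<And>u v. u \<le> v \<Longrightarrow> {u..v} \<subseteq> {a..b} \<Longrightarrow> v - u < \<delta> \<Longrightarrow> \<bar>f v - f u\<bar> < \<epsilon>"
    using abs_cont_on_small_increment[OF assms \<open>\<epsilon> > 0\<close>] by blast
  have "dist (f y) (f x) < \<epsilon>" if y: "y \<in> {a..b}" "dist y x < \<delta>" for y
  proof (cases "x \<le> y")
    case True
    then show ?thesis using small[of x y] x y by (simp add: dist_real_def)
  next
    case False
    then show ?thesis using small[of y x] x y by (simp add: dist_real_def abs_minus_commute)
  qed
  then show "\<exists>\<delta>>0. \<forall>y\<in>{a..b}. dist y x < \<delta> \<longrightarrow> dist (f y) (f x) < \<epsilon>"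
    using \<open>\<delta> > 0\<close> by blast
qed

lemma abs_cont_on_uminus: "abs_cont_on S f \<Longrightarrow> abs_cont_on S (\<lambda>x. - f x)"
  unfolding abs_cont_on_def by (simp add: abs_minus_commute)

definition variation_sums :: "real set \<Rightarrow> (real \<Rightarrow> real) \<Rightarrow> real set" where
  "variation_sums S f = {\<Sum>k<n. \<bar>f (r k) - f (l k)\<bar> | n l r. ordered_intervals S n l r}"

lemma variation_sumsI:
  "ordered_intervals S n l r \<Longrightarrow> (\<Sum>k<n. \<bar>f (r k) - f (l k)\<bar>) \<in> variation_sums S f"
  unfolding variation_sums_def by blast

lemma zero_in_variation_sums: "0 \<in> variation_sums S f"
  using variation_sumsI[of S 0] by (simp add: ordered_intervals_def)

lemma variation_sums_mono:
  assumes "S \<subseteq> T" shows "variation_sums S f \<subseteq> variation_sums T f"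
proof
  fix v assume "v \<in> variation_sums S f"
  then obtain n l r where "ordered_intervals S n l r" and "v = (\<Sum>k<n. \<bar>f (r k) - f (l k)\<bar>)"
    unfolding variation_sums_def by blast
  then show "v \<in> variation_sums T f" using variation_sumsI ordered_intervals_mono assms by blast
qed

lemma variation_sums_snoc:
  assumes v: "v \<in> variation_sums ({a..s} \<inter> G) f" and "a \<le> s" "s \<le> u" "{s..u} \<subseteq> G"
  shows "v + \<bar>f u - f s\<bar> \<in> variation_sums ({a..u} \<inter> G) f"
proof -
  obtain n l r where ord: "ordered_intervals ({a..s} \<inter> G) n l r"
    and v_eq: "v = (\<Sum>k<n. \<bar>f (r k) - f (l k)\<bar>)"
    using v unfolding variation_sums_def by blast
  have "ordered_intervals ({a..u} \<inter> G) (Suc n) (l(n := s)) (r(n := u))"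
    by (rule ordered_intervals_snoc[OF ord]) (use assms(2-4) in auto)
  from variation_sumsI[OF this, of f] show ?thesis by (simp add: v_eq)
qed

lemma abs_cont_on_small_variation_near_null:
  assumes ac: "abs_cont_on S f" and N: "N \<in> null_sets lebesgue" and "\<epsilon> > 0"
  obtains G where "open G" "N \<subseteq> G" "\<And>v. v \<in> variation_sums (S \<inter> G) f \<Longrightarrow> v < \<epsilon>"
proof -
  obtain \<delta> where "\<delta> > 0" and small: "\<forall>n l r. ordered_intervals S n l r \<and> (\<Sum>k<n. r k - l k) < \<delta>
      \<longrightarrow> (\<Sum>k<n. \<bar>f (r k) - f (l k)\<bar>) < \<epsilon>"
    using ac \<open>\<epsilon> > 0\<close> unfolding abs_cont_on_iff_ordered_intervals by blast
  obtain G where G: "open G" "N \<subseteq> G" "G - N \<in> lmeasurable" "emeasure lebesgue (G - N) < ennreal \<delta>"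
    using sets_lebesgue_outer_open[OF null_setsD2[OF N] \<open>\<delta> > 0\<close>] by blast
  have G_meas: "G \<in> lmeasurable"
    using fmeasurable_Diff_D[OF G(3) fmeasurableI_null_sets[OF N] G(2)] .
  have "measure lebesgue G = measure lebesgue (G - N)"
    using G_meas N by (simp add: measure_Diff_null_set fmeasurableD)
  also have "\<dots> < \<delta>"
    using G(3,4) \<open>\<delta> > 0\<close> by (simp add: emeasure_eq_measure2 ennreal_less_iff)
  finally have G_small: "measure lebesgue G < \<delta>" .
  show ?thesis
  proof (rule that[OF G(1,2)])
    fix v assume "v \<in> variation_sums (S \<inter> G) f"
    then obtain n l r where ord: "ordered_intervals (S \<inter> G) n l r"
      and v_eq: "v = (\<Sum>k<n. \<bar>f (r k) - f (l k)\<bar>)"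
      unfolding variation_sums_def by blast
    have "(\<Sum>k<n. r k - l k) \<le> measure lebesgue G"
      by (rule ordered_intervals_length_le_measure[OF ord _ G_meas]) simp
    then have "(\<Sum>k<n. r k - l k) < \<delta>" using G_small by linarith
    moreover have "ordered_intervals S n l r"
      using ordered_intervals_mono[OF ord] by blast
    ultimately show "v < \<epsilon>" using small v_eq by simp
  qed
qed

lemma bdd_above_variation_sums_mono:
  "bdd_above (variation_sums T f) \<Longrightarrow> S \<subseteq> T \<Longrightarrow> bdd_above (variation_sums S f)"
  using variation_sums_mono bdd_above_mono by metis

lemma Sup_variation_sums_nonneg: "bdd_above (variation_sums S f) \<Longrightarrow> 0 \<le> Sup (variation_sums S f)"
  using zero_in_variation_sums cSup_upper by metis

lemma Sup_variation_sums_mono: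
  "bdd_above (variation_sums T f) \<Longrightarrow> S \<subseteq> T \<Longrightarrow> Sup (variation_sums S f) \<le> Sup (variation_sums T f)"
  using zero_in_variation_sums variation_sums_mono cSup_subset_mono by (metis empty_iff)

lemma Sup_variation_sums_snoc:
  assumes bdd: "bdd_above (variation_sums ({a..u} \<inter> G) f)" and "a \<le> s" "s \<le> u" "{s..u} \<subseteq> G"
  shows "Sup (variation_sums ({a..s} \<inter> G) f) + \<bar>f u - f s\<bar> \<le> Sup (variation_sums ({a..u} \<inter> G) f)"
proof -
  have "v \<le> Sup (variation_sums ({a..u} \<inter> G) f) - \<bar>f u - f s\<bar>"
    if "v \<in> variation_sums ({a..s} \<inter> G) f" for v
    using cSup_upper[OF variation_sums_snoc[OF that assms(2-4)] bdd] by simp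
  then have "Sup (variation_sums ({a..s} \<inter> G) f) \<le> Sup (variation_sums ({a..u} \<inter> G) f) - \<bar>f u - f s\<bar>"
    using zero_in_variation_sums by (intro cSup_least) blast+
  then show ?thesis by simp
qed

lemma real_interval_induct:
  fixes a b :: real
  assumes "a \<le> b" and start: "P a"
    and left: "\<And>s. a < s \<Longrightarrow> s \<le> b \<Longrightarrow> (\<And>u. a \<le> u \<Longrightarrow> u < s \<Longrightarrow> P u) \<Longrightarrow> P s"
    and right: "\<And>s. a \<le> s \<Longrightarrow> s < b \<Longrightarrow> P s \<Longrightarrow> \<exists>h>0. \<forall>u. s < u \<and> u < s + h \<longrightarrow> P u"
  shows "P b"
proof -
  define A where "A = {s \<in> {a..b}. \<forall>u\<in>{a..s}. P u}"
  define s0 where "s0 = Sup A"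
  have "a \<in> A" using \<open>a \<le> b\<close> start by (simp add: A_def)
  have bdd: "bdd_above A" by (rule bdd_aboveI[of _ b]) (simp add: A_def)
  have "a \<le> s0" unfolding s0_def using \<open>a \<in> A\<close> bdd by (rule cSup_upper)
  have "s0 \<le> b" unfolding s0_def using \<open>a \<in> A\<close> by (intro cSup_least) (auto simp: A_def)
  have below: "P u" if "a \<le> u" "u < s0" for u
  proof -
    obtain s where "s \<in> A" "u < s"
      using less_cSup_iff[OF _ bdd] \<open>a \<in> A\<close> \<open>u < s0\<close> unfolding s0_def by blast
    then show ?thesis using \<open>a \<le> u\<close> by (auto simp: A_def)
  qed
  have "P s0"
  proof (cases "s0 = a")
    case True
    then show ?thesis using start by simp
  next
    case False
    then show ?thesis using left[of s0] below \<open>a \<le> s0\<close> \<open>s0 \<le> b\<close> by simp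
  qed
  have "s0 = b"
  proof (rule ccontr)
    assume "s0 \<noteq> b"
    then have "s0 < b" using \<open>s0 \<le> b\<close> by simp
    then obtain h where "h > 0" and ahead: "\<And>u. s0 < u \<Longrightarrow> u < s0 + h \<Longrightarrow> P u"
      using right[OF \<open>a \<le> s0\<close> _ \<open>P s0\<close>] by blast
    define s1 where "s1 = min (s0 + h / 2) b"
    have "s0 < s1" "s1 \<le> b" using \<open>h > 0\<close> \<open>s0 < b\<close> by (auto simp: s1_def)
    have "P u" if "a \<le> u" "u \<le> s1" for u
    proof -
      consider "u < s0" | "u = s0" | "s0 < u" by linarith
      then show ?thesis
        by cases (use below \<open>P s0\<close> ahead that \<open>h > 0\<close> in \<open>auto simp: s1_def\<close>)
    qed
    then have "s1 \<in> A" using \<open>a \<le> s0\<close> \<open>s0 < s1\<close> \<open>s1 \<le> b\<close> by (auto simp: A_def)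
    then have "s1 \<le> s0" unfolding s0_def using bdd by (rule cSup_upper)
    then show False using \<open>s0 < s1\<close> by simp
  qed
  then show ?thesis using \<open>P s0\<close> by simp
qed

lemma continuous_on_Icc_left_le:
  fixes g :: "real \<Rightarrow> real"
  assumes "continuous_on {a..s} g" "a < s" "\<And>u. a < u \<Longrightarrow> u < s \<Longrightarrow> g u \<le> c"
  shows "g s \<le> c"
proof (rule tendsto_upperbound)
  show "(g \<longlongrightarrow> g s) (at_left s)" by (rule continuous_on_Icc_at_leftD[OF assms(1,2)])
  show "eventually (\<lambda>u. g u \<le> c) (at_left s)"
    using eventually_at_left_real[OF \<open>a < s\<close>] by eventually_elim (use assms(3) in auto)
qed simp

lemma has_real_derivative_imp_right_increment_le:
  assumes "(f has_real_derivative D) (at x within S)" "D < c"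
  obtains e where "e > 0" "\<And>y. y \<in> S \<Longrightarrow> x < y \<Longrightarrow> y < x + e \<Longrightarrow> f y - f x \<le> c * (y - x)"
proof -
  have "((\<lambda>y. (f y - f x) / (y - x)) \<longlongrightarrow> D) (at x within S)"
    using assms(1) by (simp add: has_field_derivative_iff)
  then have "eventually (\<lambda>y. dist ((f y - f x) / (y - x)) D < c - D) (at x within S)"
    by (rule tendstoD) (use assms(2) in simp)
  then obtain e where "e > 0"
    and close: "\<And>y. y \<in> S \<Longrightarrow> y \<noteq> x \<Longrightarrow> dist y x < e \<Longrightarrow> dist ((f y - f x) / (y - x)) D < c - D"
    unfolding eventually_at by blast
  show ?thesis
  proof (rule that[OF \<open>e > 0\<close>])
    fix y assume "y \<in> S" "x < y" "y < x + e"
    then have "(f y - f x) / (y - x) < c"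
      using close[of y] by (auto simp: dist_real_def)
    then show "f y - f x \<le> c * (y - x)" using \<open>x < y\<close> by (simp add: divide_less_eq)
  qed
qed

lemma right_increment_le_or_subset:
  fixes f :: "real \<Rightarrow> real"
  assumes "open G" "\<eta> > 0"
    and der: "s \<notin> G \<Longrightarrow> \<exists>D. D \<le> C \<and> (f has_real_derivative D) (at s within S)"
  obtains e where "e > 0"
    "\<And>u. u \<in> S \<Longrightarrow> s < u \<Longrightarrow> u < s + e \<Longrightarrow> {s..u} \<subseteq> G \<or> f u - f s \<le> (C + \<eta>) * (u - s)"
proof (cases "s \<in> G")
  case True
  then obtain e where "e > 0" "ball s e \<subseteq> G" using \<open>open G\<close> open_contains_ball by blast
  moreover have "{s..u} \<subseteq> ball s e" if "s < u" "u < s + e" for u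
    using that by (auto simp: dist_real_def)
  ultimately show ?thesis using that by blast
next
  case False
  then obtain D where "D \<le> C" and D: "(f has_real_derivative D) (at s within S)" using der by blast
  have "D < C + \<eta>" using \<open>D \<le> C\<close> \<open>\<eta> > 0\<close> by simp
  with has_real_derivative_imp_right_increment_le[OF D] show ?thesis using that by metis
qed

text \<open>The bound is proved by continuous induction on the invariant
  \<open>f s - f a \<le> (C + \<eta>) (s - a) + W s\<close>, where \<open>W s\<close> is the supremal variation of \<open>f\<close> over
  ordered subintervals of \<open>[a, s] \<inter> G\<close>: to the right of a point outside \<open>G\<close> the derivative
  controls the increment, inside the open set \<open>G\<close> the increment is absorbed by \<open>W\<close>.\<close>
lemma increment_le_of_small_variation:
  fixes f :: "real \<Rightarrow> real"
  assumes "a \<le> b" "0 \<le> C" "\<eta> > 0" and cont: "continuous_on {a..b} f" and "open G"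
    and var: "\<And>v. v \<in> variation_sums ({a..b} \<inter> G) f \<Longrightarrow> v \<le> \<epsilon>"
    and der: "\<And>x. x \<in> {a..b} - G \<Longrightarrow> \<exists>D. D \<le> C \<and> (f has_real_derivative D) (at x within {a..b})"
  shows "f b - f a \<le> (C + \<eta>) * (b - a) + \<epsilon>"
proof -
  define W where "W s = Sup (variation_sums ({a..s} \<inter> G) f)" for s
  have "bdd_above (variation_sums ({a..b} \<inter> G) f)" using var by (rule bdd_aboveI)
  then have bdd: "bdd_above (variation_sums ({a..s} \<inter> G) f)" if "s \<le> b" for s
    by (rule bdd_above_variation_sums_mono) (use that in auto)
  have W_mono: "W s \<le> W u" if "s \<le> u" "u \<le> b" for s u
    unfolding W_def using that by (intro Sup_variation_sums_mono bdd) auto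
  have "W b \<le> \<epsilon>"
    unfolding W_def using zero_in_variation_sums var by (intro cSup_least) blast+
  define P where "P s \<longleftrightarrow> f s - f a \<le> (C + \<eta>) * (s - a) + W s" for s
  have "P b"
  proof (rule real_interval_induct[OF \<open>a \<le> b\<close>])
    show "P a" using Sup_variation_sums_nonneg[OF bdd[OF \<open>a \<le> b\<close>]] by (simp add: P_def W_def)
  next
    fix s assume "a < s" "s \<le> b" and below: "\<And>u. a \<le> u \<Longrightarrow> u < s \<Longrightarrow> P u"
    have "f s - f a - (C + \<eta>) * (s - a) \<le> W s"
    proof (rule continuous_on_Icc_left_le[OF _ \<open>a < s\<close>])
      show "continuous_on {a..s} (\<lambda>u. f u - f a - (C + \<eta>) * (u - a))"
        using \<open>s \<le> b\<close> by (intro continuous_intros continuous_on_subset[OF cont]) auto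
      show "f u - f a - (C + \<eta>) * (u - a) \<le> W s" if "a < u" "u < s" for u
        using below[of u] W_mono[of u s] that \<open>s \<le> b\<close> by (simp add: P_def)
    qed
    then show "P s" by (simp add: P_def)
  next
    fix s assume "a \<le> s" "s < b" "P s"
    obtain e where "e > 0" and near: "\<And>u. u \<in> {a..b} \<Longrightarrow> s < u \<Longrightarrow> u < s + e \<Longrightarrow>
        {s..u} \<subseteq> G \<or> f u - f s \<le> (C + \<eta>) * (u - s)"
      using right_increment_le_or_subset[OF \<open>open G\<close> \<open>\<eta> > 0\<close>, of s C f "{a..b}"] der[of s] \<open>a \<le> s\<close> \<open>s < b\<close>
      by auto
    have "P u" if u: "s < u" "u < s + e" "u \<le> b" for u
    proof -
      consider "{s..u} \<subseteq> G" | "f u - f s \<le> (C + \<eta>) * (u - s)"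
        using near[of u] u \<open>a \<le> s\<close> by auto
      then show ?thesis
      proof cases
        case 1
        then have "W s + \<bar>f u - f s\<bar> \<le> W u"
          unfolding W_def using u \<open>a \<le> s\<close> by (intro Sup_variation_sums_snoc bdd) auto
        moreover have "(C + \<eta>) * (s - a) \<le> (C + \<eta>) * (u - a)"
          using u \<open>0 \<le> C\<close> \<open>\<eta> > 0\<close> by (intro mult_left_mono) auto
        ultimately show ?thesis using \<open>P s\<close> by (simp add: P_def)
      next
        case 2
        then show ?thesis using W_mono[of s u] \<open>P s\<close> u by (simp add: P_def algebra_simps)
      qed
    qed
    then show "\<exists>h>0. \<forall>u. s < u \<and> u < s + h \<longrightarrow> P u"
      using \<open>e > 0\<close> \<open>s < b\<close> by (intro exI[of _ "min e (b - s)"]) auto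
  qed
  then show ?thesis using \<open>W b \<le> \<epsilon>\<close> by (simp add: P_def)
qed

lemma abs_cont_on_derivative_le_imp_increment_le:
  fixes f :: "real \<Rightarrow> real"
  assumes "a \<le> b" "0 \<le> C" and ac: "abs_cont_on {a..b} f" and N: "N \<in> null_sets lebesgue"
    and der: "\<And>x. x \<in> {a..b} - N \<Longrightarrow> \<exists>D. D \<le> C \<and> (f has_real_derivative D) (at x within {a..b})"
  shows "f b - f a \<le> C * (b - a)"
proof (rule field_le_epsilon)
  fix e :: real assume "e > 0"
  define \<eta> where "\<eta> = e / (2 * (b - a + 1))"
  have "\<eta> > 0" "\<eta> * (b - a) \<le> e / 2"
    using \<open>e > 0\<close> \<open>a \<le> b\<close> by (auto simp: \<eta>_def field_simps)
  obtain G where "open G" "N \<subseteq> G" and var: "\<And>v. v \<in> variation_sums ({a..b} \<inter> G) f \<Longrightarrow> v < e / 2"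
    using abs_cont_on_small_variation_near_null[OF ac N, of "e / 2"] \<open>e > 0\<close> by auto
  have "f b - f a \<le> (C + \<eta>) * (b - a) + e / 2"
    using \<open>a \<le> b\<close> \<open>0 \<le> C\<close> \<open>\<eta> > 0\<close> abs_cont_on_imp_continuous_on[OF ac] \<open>open G\<close>
  proof (rule increment_le_of_small_variation)
    show "v \<le> e / 2" if "v \<in> variation_sums ({a..b} \<inter> G) f" for v
      using var[OF that] by simp
    show "\<exists>D. D \<le> C \<and> (f has_real_derivative D) (at x within {a..b})" if "x \<in> {a..b} - G" for x
      using der that \<open>N \<subseteq> G\<close> by blast
  qed
  then show "f b - f a \<le> C * (b - a) + e"
    using \<open>\<eta> * (b - a) \<le> e / 2\<close> by (simp add: distrib_right)
qed

lemma abs_cont_on_derivative_bound: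
  fixes f :: "real \<Rightarrow> real"
  assumes "a \<le> b" "0 \<le> C" and ac: "abs_cont_on {a..b} f" and N: "N \<in> null_sets lebesgue"
    and der: "\<And>x. x \<in> {a..b} - N \<Longrightarrow> \<exists>D. \<bar>D\<bar> \<le> C \<and> (f has_real_derivative D) (at x within {a..b})"
  shows "\<bar>f b - f a\<bar> \<le> C * (b - a)"
proof -
  have "f b - f a \<le> C * (b - a)"
    using assms(1,2) ac N
    by (rule abs_cont_on_derivative_le_imp_increment_le) (use der abs_le_D1 in blast)
  moreover have "- f b - (- f a) \<le> C * (b - a)"
    using assms(1,2) abs_cont_on_uminus[OF ac] N
  proof (rule abs_cont_on_derivative_le_imp_increment_le)
    fix x assume "x \<in> {a..b} - N"
    then obtain D where "\<bar>D\<bar> \<le> C" "(f has_real_derivative D) (at x within {a..b})" using der by blast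
    then show "\<exists>D. D \<le> C \<and> ((\<lambda>x. - f x) has_real_derivative D) (at x within {a..b})"
      by (intro exI[of _ "- D"]) (auto intro: derivative_intros)
  qed
  ultimately show ?thesis by linarith
qed

lemma continuous_on_of_int_constant:
  fixes \<sigma> :: "real \<Rightarrow> int"
  assumes "continuous_on {a..b} (\<lambda>t. real_of_int (\<sigma> t))" "a \<le> b"
  shows "\<sigma> a = \<sigma> b"
proof -
  have "(\<lambda>t. real_of_int (\<sigma> t)) constant_on {a..b}"
  proof (rule continuous_discrete_range_constant[OF connected_Icc assms(1)])
    fix x
    have "1 \<le> \<bar>real_of_int (\<sigma> y) - real_of_int (\<sigma> x)\<bar>" if "\<sigma> y \<noteq> \<sigma> x" for y
      using that by linarith
    then show "\<exists>e>0. \<forall>y. y \<in> {a..b} \<and> real_of_int (\<sigma> y) \<noteq> real_of_int (\<sigma> x)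
        \<longrightarrow> e \<le> norm (real_of_int (\<sigma> y) - real_of_int (\<sigma> x))"
      by (intro exI[of _ 1]) auto
  qed
  then obtain y where "\<forall>t\<in>{a..b}. real_of_int (\<sigma> t) = y" unfolding constant_on_def by blast
  then have "real_of_int (\<sigma> a) = real_of_int (\<sigma> b)" using assms(2) by simp
  then show ?thesis by simp
qed

section \<open>Hybrid time domains\<close>

lemma
  assumes "hybrid_time_domain K"
  shows hybrid_time_domain_interval:
      "\<And>t1 t2 t m. (t1, m) \<in> K \<Longrightarrow> (t2, m) \<in> K \<Longrightarrow> t1 \<le> t \<Longrightarrow> t \<le> t2 \<Longrightarrow> (t, m) \<in> K"
    and hybrid_time_domain_time_mono:
      "\<And>t m t' m'. (t, m) \<in> K \<Longrightarrow> (t', m') \<in> K \<Longrightarrow> m < m' \<Longrightarrow> t \<le> t'"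
    and hybrid_time_domain_jump_exists:
      "\<And>t m t' m'. (t, m) \<in> K \<Longrightarrow> (t', m') \<in> K \<Longrightarrow> m < m' \<Longrightarrow> \<exists>r. (r, m) \<in> K \<and> (r, Suc m) \<in> K"
proof -
  obtain tt :: "nat \<Rightarrow> real" and L :: nat where mono: "\<forall>l. tt l \<le> tt (Suc l)" and
    "K = (\<Union>l. {tt l..tt (Suc l)} \<times> {l})
      \<or> K = (\<Union>l<L. {tt l..tt (Suc l)} \<times> {l})
      \<or> K = (\<Union>l<L. {tt l..tt (Suc l)} \<times> {l}) \<union> ({tt L..<tt (Suc L)} \<times> {L})
      \<or> K = (\<Union>l<L. {tt l..tt (Suc l)} \<times> {l}) \<union> ({tt L..} \<times> {L})"
    using assms unfolding hybrid_time_domain_def by blast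
  then have mem: "(\<forall>t m. (t, m) \<in> K \<longleftrightarrow> tt m \<le> t \<and> t \<le> tt (Suc m))
      \<or> (\<forall>t m. (t, m) \<in> K \<longleftrightarrow> m < L \<and> tt m \<le> t \<and> t \<le> tt (Suc m))
      \<or> (\<forall>t m. (t, m) \<in> K \<longleftrightarrow> (m < L \<and> tt m \<le> t \<and> t \<le> tt (Suc m)) \<or> (m = L \<and> tt L \<le> t \<and> t < tt (Suc L)))
      \<or> (\<forall>t m. (t, m) \<in> K \<longleftrightarrow> (m < L \<and> tt m \<le> t \<and> t \<le> tt (Suc m)) \<or> (m = L \<and> tt L \<le> t))"
    by (elim disjE) auto
  have tt_mono: "tt (Suc m) \<le> tt m'" if "m < m'" for m m'
    using lift_Suc_mono_le[of tt "Suc m" m'] mono that by auto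
  show "(t, m) \<in> K" if "(t1, m) \<in> K" "(t2, m) \<in> K" "t1 \<le> t" "t \<le> t2" for t1 t2 t m
    using mem that by (elim disjE) auto
  show "t \<le> t'" if "(t, m) \<in> K" "(t', m') \<in> K" "m < m'" for t m t' m'
    using mem that tt_mono[OF \<open>m < m'\<close>] by (elim disjE) auto
  show "\<exists>r. (r, m) \<in> K \<and> (r, Suc m) \<in> K" if "(t, m) \<in> K" "(t', m') \<in> K" "m < m'" for t m t' m'
  proof -
    have "(tt (Suc m), m) \<in> K \<and> (tt (Suc m), Suc m) \<in> K"
      using mem that mono tt_mono[OF \<open>m < m'\<close>] less_linear[of "Suc m" L]
      by (elim disjE) (auto simp: Suc_le_eq)
    then show ?thesis by blast
  qed
qed

lemma hybrid_time_domain_lipschitz: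
  assumes K: "hybrid_time_domain K"
    and flow: "\<And>s s' m. (s, m) \<in> K \<Longrightarrow> (s', m) \<in> K \<Longrightarrow> s \<le> s' \<Longrightarrow> \<bar>w (s', m) - w (s, m)\<bar> \<le> C * (s' - s)"
    and jump: "\<And>r m. (r, m) \<in> K \<Longrightarrow> (r, Suc m) \<in> K \<Longrightarrow> w (r, Suc m) = w (r, m)"
    and "(s, m) \<in> K" "(s', m') \<in> K" "m \<le> m'" "s \<le> s'"
  shows "\<bar>w (s', m') - w (s, m)\<bar> \<le> C * (s' - s)"
proof -
  obtain k where "m' = m + k" using \<open>m \<le> m'\<close> le_Suc_ex by blast
  have "\<bar>w (s', m + k) - w (s, m)\<bar> \<le> C * (s' - s)" if "(s, m) \<in> K" "(s', m + k) \<in> K" "s \<le> s'" for s m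
    using that
  proof (induction k arbitrary: s m)
    case 0
    then show ?case using flow by simp
  next
    case (Suc k)
    obtain r where r: "(r, m) \<in> K" "(r, Suc m) \<in> K"
      using hybrid_time_domain_jump_exists[OF K Suc.prems(1,2)] by auto
    have "s \<le> r" using hybrid_time_domain_time_mono[OF K Suc.prems(1) r(2)] by simp
    have "r \<le> s'" using hybrid_time_domain_time_mono[OF K r(1) Suc.prems(2)] by simp
    have "\<bar>w (s', Suc m + k) - w (r, Suc m)\<bar> \<le> C * (s' - r)"
      using Suc.IH[of r "Suc m"] r(2) Suc.prems(2) \<open>r \<le> s'\<close> by simp
    moreover have "\<bar>w (r, m) - w (s, m)\<bar> \<le> C * (r - s)" using flow[OF Suc.prems(1) r(1) \<open>s \<le> r\<close>] .
    moreover have "w (r, Suc m) = w (r, m)" using jump r .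
    ultimately have "\<bar>w (s', m + Suc k) - w (s, m)\<bar> \<le> C * (s' - r) + C * (r - s)" by simp
    then show ?case by (simp add: algebra_simps)
  qed
  then show ?thesis using assms(4-7) \<open>m' = m + k\<close> by blast
qed

lemma hybrid_time_domain_change_at_jump:
  assumes K: "hybrid_time_domain K"
    and const: "\<And>s s' m. (s, m) \<in> K \<Longrightarrow> (s', m) \<in> K \<Longrightarrow> \<sigma> (s, m) = \<sigma> (s', m)"
    and "(s, m) \<in> K" "(s', m') \<in> K" "m \<le> m'" "P (\<sigma> (s, m))" "\<not> P (\<sigma> (s', m'))"
  obtains r q where "m \<le> q" "q < m'" "(r, q) \<in> K" "(r, Suc q) \<in> K" "P (\<sigma> (r, q))" "\<not> P (\<sigma> (r, Suc q))"
proof -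
  obtain k where "m' = m + k" using \<open>m \<le> m'\<close> le_Suc_ex by blast
  have "\<exists>r q. m \<le> q \<and> q < m + k \<and> (r, q) \<in> K \<and> (r, Suc q) \<in> K \<and> P (\<sigma> (r, q)) \<and> \<not> P (\<sigma> (r, Suc q))"
    if "(s, m) \<in> K" "(s', m + k) \<in> K" "P (\<sigma> (s, m))" "\<not> P (\<sigma> (s', m + k))" for s m
    using that
  proof (induction k arbitrary: s m)
    case 0
    then show ?case using const[of s m s'] by simp
  next
    case (Suc k)
    obtain r where r: "(r, m) \<in> K" "(r, Suc m) \<in> K"
      using hybrid_time_domain_jump_exists[OF K Suc.prems(1,2)] by auto
    have "P (\<sigma> (r, m))" using const[OF Suc.prems(1) r(1)] Suc.prems(3) by simp
    show ?case
    proof (cases "P (\<sigma> (r, Suc m))")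
      case True
      then obtain r' q where "Suc m \<le> q" "q < Suc m + k" "(r', q) \<in> K" "(r', Suc q) \<in> K"
          "P (\<sigma> (r', q))" "\<not> P (\<sigma> (r', Suc q))"
        using Suc.IH[of r "Suc m"] r(2) Suc.prems(2,4) by auto
      then show ?thesis by (intro exI[of _ r'] exI[of _ q]) auto
    next
      case False
      then show ?thesis using r \<open>P (\<sigma> (r, m))\<close> by (intro exI[of _ r] exI[of _ m]) auto
    qed
  qed
  then show ?thesis using that assms(3,4,6,7) \<open>m' = m + k\<close> by blast
qed

section \<open>Solutions of the network model\<close>

lemma abs_sum_mult_sin_le:
  fixes b \<theta> :: "'a \<Rightarrow> real"
  shows "\<bar>\<Sum>x\<in>A. b x * sin (\<theta> x)\<bar> \<le> (\<Sum>x\<in>A. \<bar>b x\<bar>)"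
proof -
  have "\<bar>\<Sum>x\<in>A. b x * sin (\<theta> x)\<bar> \<le> (\<Sum>x\<in>A. \<bar>b x * sin (\<theta> x)\<bar>)" by (rule sum_abs)
  also have "\<dots> \<le> (\<Sum>x\<in>A. \<bar>b x\<bar>)"
    by (rule sum_mono) (simp add: abs_mult mult_left_le abs_sin_le_one)
  finally show ?thesis .
qed

lemma dist_nR_origin_le:
  assumes "\<forall>k<n. \<bar>v k\<bar> \<le> R" "\<bar>x\<bar> \<le> R"
  shows "dist_nR n v x (\<lambda>_. 0) 0 \<le> sqrt (real n * R\<^sup>2 + R\<^sup>2)"
proof -
  have sq: "y\<^sup>2 \<le> R\<^sup>2" if "\<bar>y\<bar> \<le> R" for y :: real
    using power_mono[OF that abs_ge_zero, of 2] by simp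
  have "(\<Sum>k<n. (v k - 0)\<^sup>2) \<le> (\<Sum>k<n. R\<^sup>2)"
    using assms(1) sq by (intro sum_mono) simp
  then show ?thesis
    unfolding dist_nR_def using sq[OF assms(2)] by (intro real_sqrt_le_mono) simp
qed

lemma omega_rhs_bounded:
  assumes lip: "\<And>v a w b. \<bar>gs j v a - gs j w b\<bar> \<le> L * dist_nR (ns j) v a w b"
  obtains c where "\<And>z :: hstate. \<bar>om z j\<bar> \<le> R \<Longrightarrow> \<bar>real_of_int (sg z j)\<bar> \<le> R \<Longrightarrow> (\<forall>k<ns j. \<bar>xs z j k\<bar> \<le> R) \<Longrightarrow>
      \<bar>omega_rhs E M pL B ns gs dbar j z\<bar> \<le> c"
proof
  fix z :: hstate assume om: "\<bar>om z j\<bar> \<le> R" and sg: "\<bar>real_of_int (sg z j)\<bar> \<le> R"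
    and xs: "\<forall>k<ns j. \<bar>xs z j k\<bar> \<le> R"
  define v where "v = restr (ns j) (xs z j)"
  define g0 where "g0 = \<bar>gs j (\<lambda>_. 0) 0\<bar> + \<bar>L\<bar> * sqrt (real (ns j) * R\<^sup>2 + R\<^sup>2)"
  have "0 \<le> dist_nR (ns j) v (- om z j) (\<lambda>_. 0) 0"
    unfolding dist_nR_def by (simp add: sum_nonneg)
  then have "L * dist_nR (ns j) v (- om z j) (\<lambda>_. 0) 0 \<le> \<bar>L\<bar> * dist_nR (ns j) v (- om z j) (\<lambda>_. 0) 0"
    by (intro mult_right_mono) simp_all
  also have "\<dots> \<le> \<bar>L\<bar> * sqrt (real (ns j) * R\<^sup>2 + R\<^sup>2)"
    using xs om by (intro mult_left_mono dist_nR_origin_le) (auto simp: v_def restr_def)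
  finally have "L * dist_nR (ns j) v (- om z j) (\<lambda>_. 0) 0 \<le> \<bar>L\<bar> * sqrt (real (ns j) * R\<^sup>2 + R\<^sup>2)" .
  then have g: "\<bar>gs j v (- om z j)\<bar> \<le> g0"
    using lip[of v "- om z j" "\<lambda>_. 0" 0] unfolding g0_def by linarith
  have d: "\<bar>dbar j * real_of_int (sg z j)\<bar> \<le> \<bar>dbar j\<bar> * R"
    unfolding abs_mult using sg by (intro mult_left_mono) auto
  define S1 where "S1 = (\<Sum>k\<in>{k. (j, k) \<in> E}. B (j, k) * sin (eta z (j, k)))"
  define S2 where "S2 = (\<Sum>i\<in>{i. (i, j) \<in> E}. B (i, j) * sin (eta z (i, j)))"
  define Bsum where "Bsum = (\<Sum>k\<in>{k. (j, k) \<in> E}. \<bar>B (j, k)\<bar>) + (\<Sum>i\<in>{i. (i, j) \<in> E}. \<bar>B (i, j)\<bar>)"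
  have "\<bar>S1\<bar> + \<bar>S2\<bar> \<le> Bsum"
    unfolding S1_def S2_def Bsum_def by (intro add_mono abs_sum_mult_sin_le)
  then have "\<bar>- pL j + gs j v (- om z j) - dbar j * real_of_int (sg z j) - S1 + S2\<bar>
      \<le> \<bar>pL j\<bar> + g0 + \<bar>dbar j\<bar> * R + Bsum"
    using g d by linarith
  then show "\<bar>omega_rhs E M pL B ns gs dbar j z\<bar> \<le> (\<bar>pL j\<bar> + g0 + \<bar>dbar j\<bar> * R + Bsum) / \<bar>M j\<bar>"
    unfolding omega_rhs_def S1_def S2_def v_def by (simp add: divide_right_mono)
qed

lemma bounded_sol_omega_rhs_bounded:
  assumes "bounded_sol nN E ns K z"
    and gs_lip: "\<forall>j\<in>{1..nN}. \<exists>L. \<forall>v a w b. \<bar>gs j v a - gs j w b\<bar> \<le> L * dist_nR (ns j) v a w b"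
  obtains C where "C > 0" "\<And>j p. j \<in> {1..nN} \<Longrightarrow> p \<in> K \<Longrightarrow> \<bar>omega_rhs E M pL B ns gs dbar j (z p)\<bar> \<le> C"
proof -
  obtain R :: int where R: "\<forall>p\<in>K. (\<forall>e\<in>E. \<bar>eta (z p) e\<bar> \<le> R) \<and>
     (\<forall>j\<in>{1..nN}. \<bar>om (z p) j\<bar> \<le> R \<and> \<bar>sg (z p) j\<bar> \<le> R \<and> (\<forall>k<ns j. \<bar>xs (z p) j k\<bar> \<le> R))"
    using assms(1) unfolding bounded_sol_def by blast
  have "\<exists>c. \<forall>p\<in>K. \<bar>omega_rhs E M pL B ns gs dbar j (z p)\<bar> \<le> c" if j: "j \<in> {1..nN}" for j
  proof -
    obtain L where L: "\<forall>v a w b. \<bar>gs j v a - gs j w b\<bar> \<le> L * dist_nR (ns j) v a w b"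
      using gs_lip j by blast
    obtain c where c: "\<And>x :: hstate. \<bar>om x j\<bar> \<le> R \<Longrightarrow> \<bar>real_of_int (sg x j)\<bar> \<le> R \<Longrightarrow>
        (\<forall>k<ns j. \<bar>xs x j k\<bar> \<le> R) \<Longrightarrow> \<bar>omega_rhs E M pL B ns gs dbar j x\<bar> \<le> c"
      using omega_rhs_bounded[where gs = gs and j = j and ns = ns and R = "real_of_int R", OF L[rule_format]]
      by blast
    have "\<bar>omega_rhs E M pL B ns gs dbar j (z p)\<bar> \<le> c" if "p \<in> K" for p
      using R that j by (intro c) (auto simp del: of_int_abs simp: of_int_abs[symmetric])
    then show ?thesis by blast
  qed
  then obtain c where c: "\<And>j p. j \<in> {1..nN} \<Longrightarrow> p \<in> K \<Longrightarrow> \<bar>omega_rhs E M pL B ns gs dbar j (z p)\<bar> \<le> c j"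
    by metis
  show ?thesis
  proof (rule that)
    show "1 + (\<Sum>j\<in>{1..nN}. \<bar>c j\<bar>) > 0" by (simp add: add_pos_nonneg sum_nonneg)
    show "\<bar>omega_rhs E M pL B ns gs dbar j (z p)\<bar> \<le> 1 + (\<Sum>j\<in>{1..nN}. \<bar>c j\<bar>)"
      if "j \<in> {1..nN}" "p \<in> K" for j p
    proof -
      have "c j \<le> (\<Sum>j\<in>{1..nN}. \<bar>c j\<bar>)"
        using member_le_sum[of j "{1..nN}" "\<lambda>j. \<bar>c j\<bar>"] that(1) by simp
      then show ?thesis using c[OF that] by simp
    qed
  qed
qed

lemma om_flow_coord:
  "j \<in> {1..nN} \<Longrightarrow> ((\<lambda>z. om z j), omega_rhs E M pL B ns gs dbar j) \<in> flow_coords nN E M pL B ns fs gs dbar"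
  unfolding flow_coords_def by blast

lemma sg_flow_coord:
  "j \<in> {1..nN} \<Longrightarrow> ((\<lambda>z. real_of_int (sg z j)), (\<lambda>z. 0)) \<in> flow_coords nN E M pL B ns fs gs dbar"
  unfolding flow_coords_def by blast

lemma jump_ok_om:
  "jump_ok nN E ns w0 w1 x x' \<Longrightarrow> j \<in> {1..nN} \<Longrightarrow> om x' j = om x j"
  unfolding jump_ok_def by blast

lemma jump_ok_sg_change:
  assumes "jump_ok nN E ns w0 w1 x x'" "j \<in> {1..nN}" "sg x' j \<noteq> sg x j"
  shows "(\<bar>om x j\<bar> = w1 j \<and> sg x j = 0 \<and> sg x' j \<noteq> 0) \<or> (\<bar>om x j\<bar> = w0 j \<and> sg x j \<noteq> 0 \<and> sg x' j = 0)"
proof -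
  have "sgnh (om x j) \<noteq> 0" by (simp add: sgnh_def)
  then show ?thesis using assms unfolding jump_ok_def by (auto split: if_splits)
qed

context
  fixes nN E M pL B ns fs gs dbar w0 w1 K z
  assumes sol: "is_solution nN E M pL B ns fs gs dbar w0 w1 K z"
begin

lemma solution_time_domain: "hybrid_time_domain K"
  using sol unfolding is_solution_def by blast

lemma solution_jump_ok: "(t, l) \<in> K \<Longrightarrow> (t, Suc l) \<in> K \<Longrightarrow> jump_ok nN E ns w0 w1 (z (t, l)) (z (t, Suc l))"
  using sol unfolding is_solution_def by blast

lemma solution_flow_abs_cont:
  assumes "(c, r) \<in> flow_coords nN E M pL B ns fs gs dbar" "{s..s'} \<subseteq> {t. (t, m) \<in> K}"
  shows "abs_cont_on {s..s'} (\<lambda>t. c (z (t, m)))"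
proof -
  have "\<forall>(c, r) \<in> flow_coords nN E M pL B ns fs gs dbar. loc_abs_cont_on {t. (t, m) \<in> K} (\<lambda>t. c (z (t, m)))"
    using sol unfolding is_solution_def by blast
  from bspec[OF this assms(1)] have "loc_abs_cont_on {t. (t, m) \<in> K} (\<lambda>t. c (z (t, m)))" by simp
  then show ?thesis using assms(2) unfolding loc_abs_cont_on_def by blast
qed

lemma solution_flow_deriv:
  assumes "(c, r) \<in> flow_coords nN E M pL B ns fs gs dbar" "interior {t. (t, m) \<in> K} \<noteq> {}"
  shows "AE t in lebesgue. t \<in> {t. (t, m) \<in> K} \<longrightarrow>
    ((\<lambda>s. c (z (s, m))) has_real_derivative r (z (t, m))) (at t within {t. (t, m) \<in> K})"
proof -
  have "\<forall>(c, r) \<in> flow_coords nN E M pL B ns fs gs dbar. AE t in lebesgue. t \<in> {t. (t, m) \<in> K} \<longrightarrow>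
      ((\<lambda>s. c (z (s, m))) has_real_derivative r (z (t, m))) (at t within {t. (t, m) \<in> K})"
    using sol assms(2) unfolding is_solution_def by blast
  from bspec[OF this assms(1)] show ?thesis by simp
qed

lemma solution_sg_const_on_flow:
  assumes "j \<in> {1..nN}" "(s, m) \<in> K" "(s', m) \<in> K"
  shows "sg (z (s, m)) j = sg (z (s', m)) j"
proof -
  have "sg (z (s, m)) j = sg (z (s', m)) j" if "(s, m) \<in> K" "(s', m) \<in> K" "s \<le> s'" for s s'
  proof -
    have "{s..s'} \<subseteq> {t. (t, m) \<in> K}"
      using hybrid_time_domain_interval[OF solution_time_domain that(1,2)] by auto
    then have "abs_cont_on {s..s'} (\<lambda>t. real_of_int (sg (z (t, m)) j))"
      using solution_flow_abs_cont[OF sg_flow_coord[OF assms(1)]] by simp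
    then show ?thesis
      by (rule continuous_on_of_int_constant[OF abs_cont_on_imp_continuous_on \<open>s \<le> s'\<close>])
  qed
  then show ?thesis using assms(2,3) by (metis linear)
qed

lemma solution_om_lipschitz_on_flow:
  assumes "j \<in> {1..nN}" "0 \<le> C" and bound: "\<And>p. p \<in> K \<Longrightarrow> \<bar>omega_rhs E M pL B ns gs dbar j (z p)\<bar> \<le> C"
    and "(s, m) \<in> K" "(s', m) \<in> K" "s \<le> s'"
  shows "\<bar>om (z (s', m)) j - om (z (s, m)) j\<bar> \<le> C * (s' - s)"
proof (cases "s = s'")
  case False
  define T where "T = {t. (t, m) \<in> K}"
  have "{s..s'} \<subseteq> T"
    using hybrid_time_domain_interval[OF solution_time_domain assms(4,5)] by (auto simp: T_def)
  then have "{s<..<s'} \<subseteq> interior T" by (intro interior_maximal) auto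
  moreover have "(s + s') / 2 \<in> {s<..<s'}" using False \<open>s \<le> s'\<close> by auto
  ultimately have "interior T \<noteq> {}" by blast
  then have "AE t in lebesgue. t \<in> T \<longrightarrow>
      ((\<lambda>s. om (z (s, m)) j) has_real_derivative omega_rhs E M pL B ns gs dbar j (z (t, m))) (at t within T)"
    unfolding T_def by (rule solution_flow_deriv[OF om_flow_coord[OF assms(1)]])
  then obtain N where N_sub: "{t \<in> space lebesgue. \<not> (t \<in> T \<longrightarrow>
      ((\<lambda>s. om (z (s, m)) j) has_real_derivative omega_rhs E M pL B ns gs dbar j (z (t, m))) (at t within T))} \<subseteq> N"
    and "emeasure lebesgue N = 0" "N \<in> sets lebesgue"
    by (rule AE_E)
  then have N: "N \<in> null_sets lebesgue" by auto
  have deriv: "((\<lambda>s. om (z (s, m)) j) has_real_derivative omega_rhs E M pL B ns gs dbar j (z (t, m))) (at t within T)"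
    if "t \<in> T - N" for t
    using N_sub that by auto
  show ?thesis
  proof (rule abs_cont_on_derivative_bound[OF \<open>s \<le> s'\<close> \<open>0 \<le> C\<close> _ N])
    show "abs_cont_on {s..s'} (\<lambda>t. om (z (t, m)) j)"
      using solution_flow_abs_cont[OF om_flow_coord[OF assms(1)]] \<open>{s..s'} \<subseteq> T\<close> by (simp add: T_def)
    show "\<exists>D. \<bar>D\<bar> \<le> C \<and> ((\<lambda>t. om (z (t, m)) j) has_real_derivative D) (at t within {s..s'})"
      if "t \<in> {s..s'} - N" for t
    proof -
      have "t \<in> T - N" using that \<open>{s..s'} \<subseteq> T\<close> by blast
      then have "((\<lambda>t. om (z (t, m)) j) has_real_derivative omega_rhs E M pL B ns gs dbar j (z (t, m)))
          (at t within {s..s'})"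
        using DERIV_subset[OF deriv \<open>{s..s'} \<subseteq> T\<close>] by blast
      moreover have "\<bar>omega_rhs E M pL B ns gs dbar j (z (t, m))\<bar> \<le> C"
        using bound \<open>t \<in> T - N\<close> by (simp add: T_def)
      ultimately show ?thesis by blast
    qed
  qed
qed simp

lemma solution_om_jump:
  "j \<in> {1..nN} \<Longrightarrow> (r, m) \<in> K \<Longrightarrow> (r, Suc m) \<in> K \<Longrightarrow> om (z (r, Suc m)) j = om (z (r, m)) j"
  using jump_ok_om[OF solution_jump_ok] by blast

lemma solution_om_lipschitz:
  assumes "j \<in> {1..nN}" "0 \<le> C" and bound: "\<And>p. p \<in> K \<Longrightarrow> \<bar>omega_rhs E M pL B ns gs dbar j (z p)\<bar> \<le> C"
    and "(s, m) \<in> K" "(s', m') \<in> K"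
  shows "\<bar>om (z (s', m')) j - om (z (s, m)) j\<bar> \<le> C * \<bar>s' - s\<bar>"
proof -
  have forward: "\<bar>om (z (s', m')) j - om (z (s, m)) j\<bar> \<le> C * (s' - s)"
    if "(s, m) \<in> K" "(s', m') \<in> K" "m \<le> m'" "s \<le> s'" for s m s' m'
    by (rule hybrid_time_domain_lipschitz[where w = "\<lambda>p. om (z p) j", OF solution_time_domain
          solution_om_lipschitz_on_flow[OF assms(1-3)] solution_om_jump[OF assms(1)] that])
  have ordered: "m \<le> m' \<and> s \<le> s' \<or> m' \<le> m \<and> s' \<le> s"
    using hybrid_time_domain_time_mono[OF solution_time_domain assms(4,5)]
      hybrid_time_domain_time_mono[OF solution_time_domain assms(5,4)] by linarith
  then show ?thesis
    using forward[OF assms(4,5)] forward[OF assms(5,4)] by (auto simp: abs_minus_commute)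
qed

lemma solution_switch_between:
  assumes "j \<in> {1..nN}" "(t, l) \<in> K" "(t', l') \<in> K" "l \<le> l'"
    and "P (sg (z (t, l)) j)" "\<not> P (sg (z (t', l')) j)"
  obtains r q where "(r, q) \<in> K" "(r, Suc q) \<in> K" "t \<le> r" "r \<le> t'"
    "P (sg (z (r, q)) j)" "\<not> P (sg (z (r, Suc q)) j)"
proof -
  obtain r q where "l \<le> q" "q < l'" "(r, q) \<in> K" "(r, Suc q) \<in> K"
    "P (sg (z (r, q)) j)" "\<not> P (sg (z (r, Suc q)) j)"
    using hybrid_time_domain_change_at_jump[where \<sigma> = "\<lambda>p. sg (z p) j", OF solution_time_domain
        solution_sg_const_on_flow[OF assms(1)] assms(2-6)] by blast
  moreover have "t \<le> r"
    using hybrid_time_domain_time_mono[OF solution_time_domain assms(2) \<open>(r, Suc q) \<in> K\<close>] \<open>l \<le> q\<close>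
    by simp
  moreover have "r \<le> t'"
    using hybrid_time_domain_time_mono[OF solution_time_domain \<open>(r, q) \<in> K\<close> assms(3) \<open>q < l'\<close>] .
  ultimately show ?thesis using that by blast
qed

lemma switch_times_gap:
  assumes "j \<in> {1..nN}" "0 \<le> C" and bound: "\<And>p. p \<in> K \<Longrightarrow> \<bar>omega_rhs E M pL B ns gs dbar j (z p)\<bar> \<le> C"
    and "t \<in> switch_times K z j" "t' \<in> switch_times K z j" "t < t'"
  shows "w1 j - w0 j \<le> C * (t' - t)"
proof -
  define \<omega> where "\<omega> p = om (z p) j" for p
  define \<sigma> where "\<sigma> p = sg (z p) j" for p
  obtain l where l: "(t, l) \<in> K" "(t, Suc l) \<in> K" "\<sigma> (t, Suc l) \<noteq> \<sigma> (t, l)"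
    using assms(4) unfolding switch_times_def \<sigma>_def by blast
  obtain l' where l': "(t', l') \<in> K" "(t', Suc l') \<in> K" "\<sigma> (t', Suc l') \<noteq> \<sigma> (t', l')"
    using assms(5) unfolding switch_times_def \<sigma>_def by blast
  have kind: "(\<bar>\<omega> (r, q)\<bar> = w1 j \<and> \<sigma> (r, q) = 0 \<and> \<sigma> (r, Suc q) \<noteq> 0)
      \<or> (\<bar>\<omega> (r, q)\<bar> = w0 j \<and> \<sigma> (r, q) \<noteq> 0 \<and> \<sigma> (r, Suc q) = 0)"
    if "(r, q) \<in> K" "(r, Suc q) \<in> K" "\<sigma> (r, Suc q) \<noteq> \<sigma> (r, q)" for r q
    using jump_ok_sg_change[OF solution_jump_ok[OF that(1,2)] assms(1)] that(3)
    unfolding \<omega>_def \<sigma>_def by blast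
  have "Suc l \<le> l'"
  proof (rule ccontr)
    assume "\<not> Suc l \<le> l'"
    then have "t' \<le> t" using hybrid_time_domain_time_mono[OF solution_time_domain l'(1) l(2)] by simp
    then show False using \<open>t < t'\<close> by simp
  qed
  have gap: "w1 j - w0 j \<le> C * (t' - t)"
    if "(r1, q1) \<in> K" "(r2, q2) \<in> K" "r1 \<in> {t..t'}" "r2 \<in> {t..t'}"
      "\<bar>\<omega> (r1, q1)\<bar> = w1 j \<and> \<bar>\<omega> (r2, q2)\<bar> = w0 j \<or> \<bar>\<omega> (r1, q1)\<bar> = w0 j \<and> \<bar>\<omega> (r2, q2)\<bar> = w1 j"
    for r1 q1 r2 q2
  proof -
    have "w1 j - w0 j \<le> \<bar>\<bar>\<omega> (r2, q2)\<bar> - \<bar>\<omega> (r1, q1)\<bar>\<bar>" using that(5) by auto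
    also have "\<dots> \<le> \<bar>\<omega> (r2, q2) - \<omega> (r1, q1)\<bar>" by (rule abs_triangle_ineq3)
    also have "\<dots> \<le> C * \<bar>r2 - r1\<bar>"
      unfolding \<omega>_def by (rule solution_om_lipschitz[OF assms(1-3) that(1,2)])
    also have "\<dots> \<le> C * (t' - t)"
      using \<open>0 \<le> C\<close> that(3,4) by (intro mult_left_mono) auto
    finally show ?thesis .
  qed
  show ?thesis
  proof (cases "\<sigma> (t, Suc l) = 0 \<longleftrightarrow> \<sigma> (t', l') = 0")
    case True
    then show ?thesis
      using gap[OF l(1) l'(1)] kind[OF l] kind[OF l'] \<open>t < t'\<close> by auto
  next
    case False
    obtain r q where rq: "(r, q) \<in> K" "(r, Suc q) \<in> K" "t \<le> r" "r \<le> t'"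
      "\<sigma> (r, q) = 0 \<longleftrightarrow> \<sigma> (t, Suc l) = 0" "\<not> (\<sigma> (r, Suc q) = 0 \<longleftrightarrow> \<sigma> (t, Suc l) = 0)"
      using solution_switch_between[OF assms(1) l(2) l'(1) \<open>Suc l \<le> l'\<close>,
          of "\<lambda>x. x = 0 \<longleftrightarrow> \<sigma> (t, Suc l) = 0"] False unfolding \<sigma>_def by auto
    then have "\<sigma> (r, Suc q) \<noteq> \<sigma> (r, q)" by auto
    then show ?thesis
      using gap[OF l(1) rq(1)] kind[OF l] kind[OF rq(1,2)] rq(3-5) \<open>t < t'\<close> by auto
  qed
qed

end

theorem proposition1:
  fixes nN :: nat and E :: "(nat \<times> nat) set"
    and M pL dbar w0 w1 :: "nat \<Rightarrow> real" and B :: "nat \<times> nat \<Rightarrow> real"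
    and ns :: "nat \<Rightarrow> nat"
    and fs :: "nat \<Rightarrow> (nat \<Rightarrow> real) \<Rightarrow> real \<Rightarrow> (nat \<Rightarrow> real)"
    and gs :: "nat \<Rightarrow> (nat \<Rightarrow> real) \<Rightarrow> real \<Rightarrow> real"
    and K :: "(real \<times> nat) set" and z :: "real \<times> nat \<Rightarrow> hstate"
  assumes E_sub: "E \<subseteq> {1..nN} \<times> {1..nN}"
    and E_orient: "\<forall>i j. (i, j) \<in> E \<longrightarrow> (j, i) \<notin> E"
    and connected: "\<forall>i\<in>{1..nN}. \<forall>j\<in>{1..nN}. (i, j) \<in> (E \<union> E\<inverse>)\<^sup>*"
    and M_pos: "\<forall>j\<in>{1..nN}. M j > 0"
    and B_pos: "\<forall>e\<in>E. B e > 0"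
    and fs_lip: "\<forall>j\<in>{1..nN}. \<exists>L. \<forall>v a w b.
                   norm_n (ns j) (\<lambda>k. fs j v a k - fs j w b k) \<le> L * dist_nR (ns j) v a w b"
    and gs_lip: "\<forall>j\<in>{1..nN}. \<exists>L. \<forall>v a w b.
                   \<bar>gs j v a - gs j w b\<bar> \<le> L * dist_nR (ns j) v a w b"
    and dbar_nonneg: "\<forall>j\<in>{1..nN}. dbar j \<ge> 0"
    and thresholds: "\<forall>j\<in>{1..nN}. w1 j > w0 j \<and> w0 j > 0"
    and sol: "is_solution nN E M pL B ns fs gs dbar w0 w1 K z"
    and compl: "complete_dom K"
    and bdd: "bounded_sol nN E ns K z"
  shows "\<exists>\<tau>>0. \<forall>j\<in>{1..nN}. \<forall>t\<in>switch_times K z j. \<forall>t'\<in>switch_times K z j.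
           (\<exists>s\<in>switch_times K z j. s < t) \<and> t < t' \<longrightarrow> t' - t \<ge> \<tau>"
proof -
  obtain C where "C > 0"
    and bound: "\<And>j p. j \<in> {1..nN} \<Longrightarrow> p \<in> K \<Longrightarrow> \<bar>omega_rhs E M pL B ns gs dbar j (z p)\<bar> \<le> C"
    using bounded_sol_omega_rhs_bounded[OF bdd gs_lip] by blast
  define d where "d = Min (insert 1 ((\<lambda>j. w1 j - w0 j) ` {1..nN}))"
  have "d > 0" using thresholds by (simp add: d_def)
  have "d \<le> w1 j - w0 j" if "j \<in> {1..nN}" for j
    unfolding d_def by (rule Min_le) (use that in auto)
  then have "d \<le> C * (t' - t)"
    if "j \<in> {1..nN}" "t \<in> switch_times K z j" "t' \<in> switch_times K z j" "t < t'" for j t t'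
    using switch_times_gap[OF sol that(1) less_imp_le[OF \<open>C > 0\<close>] bound that(2-4)] that(1)
    by fastforce
  then show ?thesis
    using \<open>d > 0\<close> \<open>C > 0\<close> by (intro exI[of _ "d / C"]) (auto simp: pos_divide_le_eq mult.commute)
qed

end
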